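(* Let $-1<\lambda\le0$. Then the function $t\mapsto-(\phi_\lambda^{[-1]})'(t)$ is non-increasing on $(0,\infty)$. Furthermore, if $-1<\lambda\le-1/2$ this function is convex on $(0,\infty)$, whereas if $-1/2<\lambda\le0$ it fails to be convex on $(0,\infty)$.
   Context: For $\lambda\neq-1,0$, $\phi_\lambda(x)=\frac{1}{\lambda(\lambda+1)}(x^{\lambda+1}-x+\lambda(1-x))$, and $\phi_0(x)=1-x+x\log x$, for $x\ge0$ (value at $0$ as a limit). For $-1<\lambda\le0$, $\phi_\lambda(0)=1/(\lambda+1)$ and $\phi_\lambda$ is convex and strictly decreasing on $[0,1]$ with $\phi_\lambda(1)=0$. The pseudoinverse is $\phi_\lambda^{[-1]}(t)=\phi_\lambda^{-1}(t)$ (inverse of $\phi_\lambda|_{[0,1]}$) for $0\le t<\phi_\lambda(0)$ and $\phi_\lambda^{[-1]}(t)=0$ for $t\ge\phi_\lambda(0)$; for these $\lambda$ it is differentiable on $(0,\infty)$. *)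

theory Defs
  imports "HOL-Analysis.Analysis"
begin

text \<open>Cressie-Read type generator phi_lambda on [0,inf). For lambda not in {-1,0}:
  (x^(lambda+1) - x + lambda(1-x)) / (lambda(lambda+1)); for lambda = 0: 1 - x + x log x.
  At x = 0 the value is the limit (for lambda > -1 this equals the formula with 0^(lambda+1) = 0,
  resp. 0 log 0 = 0).\<close>
definition phi :: "real \<Rightarrow> real \<Rightarrow> real" where
  "phi lam x =
     (if lam = 0 then (if x = 0 then 1 else 1 - x + x * ln x)
      else (if x = 0 then (0 - 0 + lam) / (lam * (lam + 1))
            else (x powr (lam + 1) - x + lam * (1 - x)) / (lam * (lam + 1))))"

definition phi_pinv :: "real \<Rightarrow> real \<Rightarrow> real" where
  "phi_pinv lam t =
     (if 0 \<le> t \<and> t < phi lam 0 then (THE x. x \<in> {0..1} \<and> phi lam x = t) else 0)"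

end

theory Submission
  imports Defs "HOL-Real_Asymp.Real_Asymp"
begin

text \<open>On \<open>(0, phi lam 0)\<close> the pseudoinverse is a genuine inverse of \<open>phi lam\<close>, so
  \<open>-(phi_pinv lam)'(t) = -1 / phi'(x)\<close> with \<open>x = phi_pinv lam t\<close>; for \<open>t > phi lam 0\<close> the
  derivative vanishes, and at \<open>t = phi lam 0\<close> it vanishes as well because
  \<open>phi lam 0 - phi lam x\<close> is much larger than \<open>x\<close> as \<open>x \<rightarrow> 0\<close>. As \<open>phi'\<close> is increasing and
  \<open>x\<close> decreases with \<open>t\<close>, the function \<open>-1 / phi'(x)\<close> decreases in \<open>t\<close>.

  Its \<open>t\<close>-derivative is \<open>phi''(x) / phi'(x)^3 = lam^3 x^(-2 lam - 1) / (1 - x^(-lam))^3\<close>, which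
  increases with \<open>t\<close> when \<open>lam \<le> -1/2\<close>; being nonnegative with limit \<open>0\<close> at \<open>phi lam 0\<close>, the
  function then stays convex after gluing on the zero function. When \<open>lam > -1/2\<close>, the quotient
  \<open>(-1 / phi'(x)) / (phi lam 0 - phi lam x)\<close> tends to \<open>\<infinity>\<close> as \<open>x \<rightarrow> 0\<close>, whereas convexity together
  with the zero at \<open>phi lam 0\<close> bounds it by a chord slope.\<close>

definition phi_deriv :: "real \<Rightarrow> real \<Rightarrow> real" where
  "phi_deriv lam x = (if lam = 0 then ln x else (x powr lam - 1) / lam)"

lemma phi_deriv_eq_ln: "phi_deriv 0 = ln"
  by (rule ext) (simp add: phi_deriv_def)

lemma phi_deriv_eq_powr: "lam \<noteq> 0 \<Longrightarrow> phi_deriv lam = (\<lambda>x. (x powr lam - 1) / lam)"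
  by (rule ext) (simp add: phi_deriv_def)

lemma phi_eq_powr:
  "lam \<noteq> 0 \<Longrightarrow> phi lam = (\<lambda>x. (x powr (lam + 1) - x + lam * (1 - x)) / (lam * (lam + 1)))"
  by (rule ext) (simp add: phi_def)

lemma phi_eq_ln: "phi 0 = (\<lambda>x. 1 - x + x * ln x)"
  by (rule ext) (simp add: phi_def)

lemma phi_at_0: "-1 < lam \<Longrightarrow> phi lam 0 = 1 / (lam + 1)"
  by (auto simp: phi_def)

lemma phi_at_0_pos: "-1 < lam \<Longrightarrow> 0 < phi lam 0"
  by (simp add: phi_at_0)

lemma phi_at_1: "phi lam 1 = 0"
  by (simp add: phi_def)

lemma phi_has_real_derivative:
  assumes "lam \<noteq> -1" "0 < x"
  shows "(phi lam has_real_derivative phi_deriv lam x) (at x)"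
proof (cases "lam = 0")
  case True
  show ?thesis unfolding True phi_eq_ln phi_deriv_eq_ln using assms
    by (auto intro!: derivative_eq_intros)
next
  case False
  have "(lam + 1) * x powr lam - 1 - lam = (lam + 1) * (x powr lam - 1)"
    by (simp add: algebra_simps)
  then have "((lam + 1) * x powr lam - 1 - lam) / (lam * (lam + 1)) = (x powr lam - 1) / lam"
    using assms by simp
  then show ?thesis unfolding phi_eq_powr[OF False] phi_deriv_eq_powr[OF False] using assms False
    by (auto intro!: derivative_eq_intros)
qed

lemma phi_deriv_has_real_derivative:
  assumes "0 < x"
  shows "(phi_deriv lam has_real_derivative x powr (lam - 1)) (at x)"
proof (cases "lam = 0")
  case True
  have "x powr (lam - 1) = 1 / x" using assms by (simp add: True powr_minus_divide)
  then show ?thesis using DERIV_ln_divide[OF assms] by (simp add: True phi_deriv_eq_ln)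
next
  case False
  then show ?thesis unfolding phi_deriv_eq_powr[OF False] using assms
    by (auto intro!: derivative_eq_intros)
qed

lemma phi_deriv_neg:
  assumes "0 < x" "x < 1"
  shows "phi_deriv lam x < 0"
proof -
  consider "lam < 0" | "lam = 0" | "0 < lam" by linarith
  then show ?thesis
  proof cases
    case 1
    then have "1 < x powr lam" using powr_less_mono2_neg[OF 1 assms] by simp
    then show ?thesis using 1 by (simp add: phi_deriv_def divide_pos_neg)
  next
    case 3
    then have "x powr lam < 1" using powr_less_mono2[of lam x 1] assms by simp
    then show ?thesis using 3 by (simp add: phi_deriv_def divide_neg_pos)
  qed (use assms in \<open>simp add: phi_deriv_def\<close>)
qed

lemma phi_deriv_mono:
  assumes "0 < x" "x \<le> y"
  shows "phi_deriv lam x \<le> phi_deriv lam y"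
proof -
  consider "lam < 0" | "lam = 0" | "0 < lam" by linarith
  then show ?thesis
  proof cases
    case 1
    then have "y powr lam \<le> x powr lam"
      using assms by (cases "x = y") (auto intro: less_imp_le[OF powr_less_mono2_neg])
    then show ?thesis using 1 by (simp add: phi_deriv_def divide_right_mono_neg)
  next
    case 3
    then have "x powr lam \<le> y powr lam" using assms by (intro powr_mono2) auto
    then show ?thesis using 3 by (simp add: phi_deriv_def divide_right_mono)
  qed (use assms in \<open>simp add: phi_deriv_def\<close>)
qed

lemma continuous_on_phi:
  assumes "-1 < lam"
  shows "continuous_on {0..1} (phi lam)"
proof (rule continuous_on_IccI)
  show "(phi lam \<longlongrightarrow> phi lam 0) (at_right 0)"
  proof (cases "lam = 0")
    case True
    have "((\<lambda>x::real. 1 - x + x * ln x) \<longlongrightarrow> 1) (at_right 0)" by real_asymp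
    then show ?thesis unfolding True phi_eq_ln by simp
  next
    case False
    have "\<forall>\<^sub>F x in at_right (0::real). 0 \<le> x"
      by (rule eventually_mono[OF eventually_at_right_less]) auto
    then have "((\<lambda>x. (x powr (lam + 1) - x + lam * (1 - x)) / (lam * (lam + 1))) \<longlongrightarrow>
        (0 powr (lam + 1) - 0 + lam * (1 - 0)) / (lam * (lam + 1))) (at_right 0)"
      using assms False by (intro tendsto_intros) auto
    then show ?thesis unfolding phi_eq_powr[OF False] by simp
  qed
  have "isCont (phi lam) x" if "0 < x" for x
    by (rule DERIV_isCont[OF phi_has_real_derivative]) (use assms that in auto)
  then show "(phi lam \<longlongrightarrow> phi lam 1) (at_left 1)"
    and "\<And>x. 0 < x \<Longrightarrow> x < 1 \<Longrightarrow> (phi lam \<longlongrightarrow> phi lam x) (at x)"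
    by (auto simp: isCont_def filterlim_at_split)
qed simp

lemma phi_strict_decreasing:
  assumes "-1 < lam" "0 \<le> a" "a < b" "b \<le> 1"
  shows "phi lam b < phi lam a"
proof (rule DERIV_neg_imp_decreasing_open[OF assms(3)])
  fix x assume "a < x" "x < b"
  then show "\<exists>y. (phi lam has_real_derivative y) (at x) \<and> y < 0"
    using assms phi_has_real_derivative phi_deriv_neg by (intro exI[of _ "phi_deriv lam x"]) auto
next
  show "continuous_on {a..b} (phi lam)"
    using continuous_on_phi[OF assms(1)] by (rule continuous_on_subset) (use assms in auto)
qed

lemma inj_on_phi:
  assumes "-1 < lam"
  shows "inj_on (phi lam) {0..1}"
proof (rule linorder_inj_onI')
  fix x y :: real assume "x \<in> {0..1}" "y \<in> {0..1}" "x < y"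
  then show "phi lam x \<noteq> phi lam y" using phi_strict_decreasing[OF assms, of x y] by simp
qed

lemma phi_image:
  assumes "-1 < lam"
  shows "phi lam ` {0..1} = {0..phi lam 0}"
proof
  have "phi lam x \<in> {phi lam 1..phi lam 0}" if "x \<in> {0..1}" for x
    using that phi_strict_decreasing[OF assms, of 0 x] phi_strict_decreasing[OF assms, of x 1]
    by (cases "x = 0"; cases "x = 1") auto
  then show "phi lam ` {0..1} \<subseteq> {0..phi lam 0}" by (auto simp: phi_at_1)
  show "{0..phi lam 0} \<subseteq> phi lam ` {0..1}"
  proof
    fix t assume "t \<in> {0..phi lam 0}"
    then obtain x where "0 \<le> x" "x \<le> 1" "phi lam x = t"
      using IVT2'[of "phi lam" 1 t 0] continuous_on_phi[OF assms] by (auto simp: phi_at_1)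
    then show "t \<in> phi lam ` {0..1}" by auto
  qed
qed

lemma phi_pinv_phi:
  assumes "-1 < lam" "x \<in> {0..1}"
  shows "phi_pinv lam (phi lam x) = x"
proof (cases "x = 0")
  case False
  then have "phi lam x < phi lam 0" using assms phi_strict_decreasing[OF assms(1), of 0 x] by auto
  moreover have "(THE y. y \<in> {0..1} \<and> phi lam y = phi lam x) = x"
    using assms inj_on_phi[OF assms(1)] by (intro the_equality) (auto dest: inj_onD)
  ultimately show ?thesis using phi_image[OF assms(1)] assms by (auto simp: phi_pinv_def)
qed (simp add: phi_pinv_def)

lemma phi_phi_pinv:
  assumes "-1 < lam" "t \<in> {0..phi lam 0}"
  shows "phi lam (phi_pinv lam t) = t" and "phi_pinv lam t \<in> {0..1}"
proof -
  obtain x where "x \<in> {0..1}" "t = phi lam x" using assms phi_image by blast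
  then show "phi lam (phi_pinv lam t) = t" "phi_pinv lam t \<in> {0..1}"
    using phi_pinv_phi[OF assms(1)] by auto
qed

lemma phi_pinv_bounds:
  assumes "-1 < lam" "0 \<le> t" "t < phi lam 0"
  shows "0 < phi_pinv lam t" and "0 < t \<Longrightarrow> phi_pinv lam t < 1"
proof -
  have t: "phi lam (phi_pinv lam t) = t" "phi_pinv lam t \<in> {0..1}"
    using phi_phi_pinv[OF assms(1), of t] assms by auto
  then show "0 < phi_pinv lam t" using assms by (cases "phi_pinv lam t = 0") auto
  show "phi_pinv lam t < 1" if "0 < t"
    using t that by (cases "phi_pinv lam t = 1") (auto simp: phi_at_1)
qed

lemma phi_pinv_beyond: "phi lam 0 \<le> t \<Longrightarrow> phi_pinv lam t = 0"
  by (simp add: phi_pinv_def)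

lemma continuous_on_phi_pinv:
  assumes "-1 < lam"
  shows "continuous_on {0..phi lam 0} (phi_pinv lam)"
  using continuous_on_inv[OF continuous_on_phi[OF assms] compact_Icc, of "phi_pinv lam"]
    phi_pinv_phi[OF assms] phi_image[OF assms] by auto

lemma phi_pinv_antimono:
  assumes "-1 < lam" "0 \<le> r" "r \<le> s" "s \<le> phi lam 0"
  shows "phi_pinv lam s \<le> phi_pinv lam r"
proof (rule ccontr)
  assume "\<not> ?thesis"
  then have "phi lam (phi_pinv lam s) < phi lam (phi_pinv lam r)"
    using phi_strict_decreasing[OF assms(1), of "phi_pinv lam r" "phi_pinv lam s"]
      phi_phi_pinv(2)[OF assms(1), of r] phi_phi_pinv(2)[OF assms(1), of s] assms by simp
  then show False using phi_phi_pinv(1)[OF assms(1)] assms by auto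
qed

lemma phi_pinv_tendsto_at_left:
  assumes "-1 < lam"
  shows "filterlim (phi_pinv lam) (at_right 0) (at_left (phi lam 0))"
proof (rule tendsto_imp_filterlim_at_right)
  have "0 < phi lam 0" using phi_at_0_pos[OF assms] .
  then have "(phi_pinv lam \<longlongrightarrow> phi_pinv lam (phi lam 0)) (at_left (phi lam 0))"
    by (rule continuous_on_Icc_at_leftD[OF continuous_on_phi_pinv[OF assms]])
  then show "(phi_pinv lam \<longlongrightarrow> 0) (at_left (phi lam 0))" by (simp add: phi_pinv_beyond)
  show "\<forall>\<^sub>F t in at_left (phi lam 0). 0 < phi_pinv lam t"
    using eventually_at_left_real[OF \<open>0 < phi lam 0\<close>]
    by (rule eventually_mono) (use phi_pinv_bounds[OF assms] in auto)
qed

lemma phi_pinv_has_real_derivative_below: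
  assumes "-1 < lam" "0 < t" "t < phi lam 0"
  shows "(phi_pinv lam has_real_derivative inverse (phi_deriv lam (phi_pinv lam t))) (at t)"
proof (rule DERIV_inverse_function[where a = 0 and b = "phi lam 0"])
  have x: "0 < phi_pinv lam t" "phi_pinv lam t < 1" using phi_pinv_bounds[OF assms(1), of t] assms by auto
  then show "(phi lam has_real_derivative phi_deriv lam (phi_pinv lam t)) (at (phi_pinv lam t))"
    using phi_has_real_derivative assms by auto
  show "phi_deriv lam (phi_pinv lam t) \<noteq> 0" using phi_deriv_neg x by (metis less_irrefl)
  show "\<And>y. 0 < y \<Longrightarrow> y < phi lam 0 \<Longrightarrow> phi lam (phi_pinv lam y) = y"
    using phi_phi_pinv(1)[OF assms(1)] by simp
  show "isCont (phi_pinv lam) t"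
    using continuous_on_interior[OF continuous_on_phi_pinv[OF assms(1)]] assms by simp
qed (use assms in auto)

lemma phi_pinv_has_real_derivative_above:
  assumes "phi lam 0 < t"
  shows "(phi_pinv lam has_real_derivative 0) (at t)"
  by (rule has_field_derivative_transform_within_open[of "\<lambda>_. 0" 0 t "{phi lam 0<..}"])
     (use assms phi_pinv_beyond in auto)

lemma phi_0_minus_phi:
  assumes "-1 < lam" "lam \<noteq> 0" "0 < x"
  shows "phi lam 0 - phi lam x = x * ((1 + lam) - x powr lam) / (lam * (lam + 1))"
proof -
  have "x powr (lam + 1) = x * x powr lam" using assms by (simp add: powr_add)
  then have "lam - (x powr (lam + 1) - x + lam * (1 - x)) = x * ((1 + lam) - x powr lam)"
    by (simp add: algebra_simps)
  moreover have "phi lam 0 - phi lam x = (lam - (x powr (lam + 1) - x + lam * (1 - x))) / (lam * (lam + 1))"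
    unfolding phi_eq_powr[OF assms(2)] using assms by (simp add: diff_divide_distrib)
  ultimately show ?thesis by simp
qed

lemma tendsto_div_phi_gap:
  assumes "-1 < lam" "lam \<le> 0"
  shows "((\<lambda>x. x / (phi lam 0 - phi lam x)) \<longlongrightarrow> 0) (at_right 0)"
proof (cases "lam = 0")
  case True
  have "((\<lambda>x::real. x / (1 - (1 - x + x * ln x))) \<longlongrightarrow> 0) (at_right 0)" by real_asymp
  then show ?thesis unfolding True phi_eq_ln by simp
next
  case False
  then have "lam < 0" using assms by simp
  then have "((\<lambda>x::real. x / (x * ((1 + lam) - x powr lam) / (lam * (lam + 1)))) \<longlongrightarrow> 0) (at_right 0)"
    using assms by real_asymp
  moreover have "\<forall>\<^sub>F x in at_right 0.
      x / (x * ((1 + lam) - x powr lam) / (lam * (lam + 1))) = x / (phi lam 0 - phi lam x)"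
    by (rule eventually_mono[OF eventually_at_right_less]) (use phi_0_minus_phi assms False in auto)
  ultimately show ?thesis by (rule Lim_transform_eventually)
qed

lemma phi_pinv_has_real_derivative_at_phi_0:
  assumes "-1 < lam" "lam \<le> 0"
  shows "(phi_pinv lam has_real_derivative 0) (at (phi lam 0))"
  unfolding has_field_derivative_iff
proof (rule filterlim_split_at)
  let ?c = "phi lam 0"
  show "((\<lambda>y. (phi_pinv lam y - phi_pinv lam ?c) / (y - ?c)) \<longlongrightarrow> 0) (at_right ?c)"
    by (rule tendsto_eventually, rule eventually_mono[OF eventually_at_right_less])
       (simp add: phi_pinv_beyond)
  have "0 < ?c" using phi_at_0_pos[OF assms(1)] .
  have "((\<lambda>y. - (phi_pinv lam y / (?c - phi lam (phi_pinv lam y)))) \<longlongrightarrow> - 0) (at_left ?c)"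
    by (intro tendsto_minus filterlim_compose[OF tendsto_div_phi_gap[OF assms]]
        phi_pinv_tendsto_at_left assms)
  moreover have "\<forall>\<^sub>F y in at_left ?c. - (phi_pinv lam y / (?c - phi lam (phi_pinv lam y)))
      = (phi_pinv lam y - phi_pinv lam ?c) / (y - ?c)"
  proof (rule eventually_mono[OF eventually_at_left_real[OF \<open>0 < ?c\<close>]])
    fix y assume "y \<in> {0<..<?c}"
    then have "phi lam (phi_pinv lam y) = y" using phi_phi_pinv(1)[OF assms(1)] by simp
    then show "- (phi_pinv lam y / (?c - phi lam (phi_pinv lam y)))
      = (phi_pinv lam y - phi_pinv lam ?c) / (y - ?c)"
      by (simp add: phi_pinv_beyond minus_divide_right)
  qed
  ultimately show "((\<lambda>y. (phi_pinv lam y - phi_pinv lam ?c) / (y - ?c)) \<longlongrightarrow> 0) (at_left ?c)"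
    using Lim_transform_eventually by fastforce
qed

definition neg_pinv_deriv :: "real \<Rightarrow> real \<Rightarrow> real" where
  "neg_pinv_deriv lam t = (if t < phi lam 0 then - inverse (phi_deriv lam (phi_pinv lam t)) else 0)"

lemma neg_deriv_phi_pinv:
  assumes "-1 < lam" "lam \<le> 0" "0 < t"
  shows "- deriv (phi_pinv lam) t = neg_pinv_deriv lam t"
proof -
  consider "t < phi lam 0" | "t = phi lam 0" | "phi lam 0 < t" by linarith
  then show ?thesis
  proof cases
    case 1
    then show ?thesis
      using DERIV_imp_deriv[OF phi_pinv_has_real_derivative_below[OF assms(1,3) 1]]
      by (simp add: neg_pinv_deriv_def)
  next
    case 2
    then show ?thesis
      using DERIV_imp_deriv[OF phi_pinv_has_real_derivative_at_phi_0[OF assms(1,2)]]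
      by (simp add: neg_pinv_deriv_def)
  next
    case 3
    then show ?thesis
      using DERIV_imp_deriv[OF phi_pinv_has_real_derivative_above[OF 3]]
      by (simp add: neg_pinv_deriv_def)
  qed
qed

lemma neg_pinv_deriv_nonneg:
  assumes "-1 < lam" "0 < t"
  shows "0 \<le> neg_pinv_deriv lam t"
proof (cases "t < phi lam 0")
  case True
  then have "phi_deriv lam (phi_pinv lam t) < 0"
    using phi_pinv_bounds[OF assms(1), of t] assms phi_deriv_neg by simp
  then show ?thesis using True by (simp add: neg_pinv_deriv_def)
qed (simp add: neg_pinv_deriv_def)

lemma neg_pinv_deriv_antimono:
  assumes "-1 < lam" "0 < r" "r \<le> s"
  shows "neg_pinv_deriv lam s \<le> neg_pinv_deriv lam r"
proof (cases "s < phi lam 0")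
  case True
  have x: "0 < phi_pinv lam s" "phi_pinv lam r < 1"
    using phi_pinv_bounds[OF assms(1)] assms True by auto
  have "phi_pinv lam s \<le> phi_pinv lam r" using phi_pinv_antimono[OF assms(1)] assms True by simp
  then have "phi_deriv lam (phi_pinv lam s) \<le> phi_deriv lam (phi_pinv lam r)"
    using phi_deriv_mono x by simp
  moreover have "phi_deriv lam (phi_pinv lam r) < 0"
    using phi_deriv_neg x(2) phi_pinv_bounds(1)[OF assms(1), of r] assms True by simp
  ultimately have "inverse (phi_deriv lam (phi_pinv lam r)) \<le> inverse (phi_deriv lam (phi_pinv lam s))"
    by (rule le_imp_inverse_le_neg)
  then show ?thesis using True assms by (simp add: neg_pinv_deriv_def)
next
  case False
  then show ?thesis using neg_pinv_deriv_nonneg[OF assms(1), of r] assms by (simp add: neg_pinv_deriv_def)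
qed

lemma convex_on_extend_right:
  fixes f :: "real \<Rightarrow> real"
  assumes cv: "convex_on {a<..<b} f" and lim: "(f \<longlongrightarrow> f b) (at_left b)"
  shows "convex_on {a<..b} f"
proof (rule convex_on_linorderI)
  fix t x y :: real
  assume t: "0 < t" "t < 1" and x: "x \<in> {a<..b}" and y: "y \<in> {a<..b}" and "x < y"
  show "f ((1 - t) *\<^sub>R x + t *\<^sub>R y) \<le> (1 - t) * f x + t * f y"
  proof (cases "y < b")
    case True
    then show ?thesis using convex_onD[OF cv, of t x y] t x y \<open>x < y\<close> by simp
  next
    case False
    then have "y = b" "x < b" using x y \<open>x < y\<close> by auto
    define z where "z = (1 - t) * x + t * b"
    have "0 < t * (b - x)" "0 < (1 - t) * (b - x)" using t \<open>x < b\<close> by simp_all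
    then have "x < z" "z < b" unfolding z_def by (simp_all add: algebra_simps)
    then have "z \<in> {a<..<b}" using x by simp
    then have "isCont f z"
      using convex_on_continuous[OF open_greaterThanLessThan cv]
      by (simp add: continuous_on_eq_continuous_at)
    have "((\<lambda>w. (1 - t) * x + t * w) \<longlongrightarrow> z) (at_left b)"
      unfolding z_def by (intro tendsto_intros)
    then have lhs: "((\<lambda>w. f ((1 - t) * x + t * w)) \<longlongrightarrow> f z) (at_left b)"
      by (rule isCont_tendsto_compose[OF \<open>isCont f z\<close>])
    have rhs: "((\<lambda>w. (1 - t) * f x + t * f w) \<longlongrightarrow> (1 - t) * f x + t * f b) (at_left b)"
      by (intro tendsto_intros lim)
    have "\<forall>\<^sub>F w in at_left b. f ((1 - t) * x + t * w) \<le> (1 - t) * f x + t * f w"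
    proof (rule eventually_mono[OF eventually_at_left_real[OF \<open>x < b\<close>]])
      fix w assume "w \<in> {x<..<b}"
      then show "f ((1 - t) * x + t * w) \<le> (1 - t) * f x + t * f w"
        using convex_onD[OF cv, of t x w] t x by simp
    qed
    then have "f z \<le> (1 - t) * f x + t * f b"
      by (rule tendsto_le[OF trivial_limit_at_left_real rhs lhs])
    then show ?thesis using \<open>y = b\<close> by (simp add: z_def)
  qed
qed (simp add: convex_real_interval)

lemma convex_on_extend_by_zero:
  fixes f :: "real \<Rightarrow> real"
  assumes cv: "convex_on {a<..b} f"
    and nonneg: "\<And>x. a < x \<Longrightarrow> x \<le> b \<Longrightarrow> 0 \<le> f x"
    and zero: "\<And>x. b \<le> x \<Longrightarrow> f x = 0"
  shows "convex_on {a<..} f"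
proof (rule convex_on_linorderI)
  fix t x y :: real
  assume t: "0 < t" "t < 1" and x: "x \<in> {a<..}" and y: "y \<in> {a<..}" and "x < y"
  define z where "z = (1 - t) * x + t * y"
  have "0 < t * (y - x)" "0 < (1 - t) * (y - x)" using t \<open>x < y\<close> by simp_all
  then have "x < z" "z < y" unfolding z_def by (simp_all add: algebra_simps)
  have zx: "z - x = t * (y - x)" by (simp add: z_def algebra_simps)
  consider "y \<le> b" | "b \<le> x" | "x < b" "b < y" "b \<le> z" | "x < b" "b < y" "z < b" by linarith
  then have "f z \<le> (1 - t) * f x + t * f y"
  proof cases
    case 1
    then show ?thesis using convex_onD[OF cv, of t x y] t x y \<open>x < y\<close> by (simp add: z_def)
  next
    case 2
    then show ?thesis using zero \<open>x < z\<close> \<open>x < y\<close> by simp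
  next
    case 3
    then show ?thesis using zero nonneg[of x] x t by simp
  next
    case 4
    have "convex_on {x..b} f" by (rule convex_on_subset[OF cv]) (use x in auto)
    then have "f z \<le> (f x - f b) / (b - x) * (b - z) + f b"
      by (rule convex_onD_Icc'') (use \<open>x < z\<close> 4 in auto)
    also have "\<dots> = f x * ((b - z) / (b - x))" using zero[of b] by simp
    also have "\<dots> \<le> f x * (1 - t)"
    proof (rule mult_left_mono)
      have "b - z \<le> (1 - t) * (b - x)" using zx 4 t by (simp add: algebra_simps)
      then show "(b - z) / (b - x) \<le> 1 - t" using 4 by (simp add: divide_le_eq)
    qed (use nonneg[of x] x 4 in auto)
    finally show ?thesis using zero[of y] 4 by (simp add: mult.commute)
  qed
  then show "f ((1 - t) *\<^sub>R x + t *\<^sub>R y) \<le> (1 - t) * f x + t * f y" by (simp add: z_def)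
qed (simp add: convex_real_interval)

text \<open>In this form the monotonicity in \<open>z\<close> is visible when \<open>-2 lam - 1 \<ge> 0\<close>.\<close>
lemma phi_deriv2_div_cube_eq:
  assumes "lam < 0" "0 < z" "z < 1"
  shows "z powr (lam - 1) / phi_deriv lam z ^ 3 = lam ^ 3 * (z powr (-2 * lam - 1) / (1 - z powr (-lam)) ^ 3)"
proof -
  define p where "p = z powr (-lam)"
  have "0 < p" "p < 1" using assms powr_less_mono2[of "-lam" z 1] by (auto simp: p_def)
  have "z powr lam = 1 / p" using assms by (simp add: p_def powr_minus_divide)
  then have d: "phi_deriv lam z = (1 - p) / (lam * p)" and e1: "z powr (lam - 1) = 1 / (p * z)"
    using assms \<open>0 < p\<close> by (simp_all add: phi_deriv_def powr_diff field_simps)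
  have "-2 * lam - 1 = (-lam) + (-lam) - 1" by simp
  then have e2: "z powr (-2 * lam - 1) = p ^ 2 / z"
    using assms by (simp only: p_def powr_diff powr_add power2_eq_square) simp
  have "((1 - p) / (lam * p)) ^ 3 = (1 - p) ^ 3 / (lam ^ 3 * p ^ 3)"
    by (simp add: power_divide power_mult_distrib)
  then show ?thesis
    using assms \<open>0 < p\<close> \<open>p < 1\<close> unfolding p_def[symmetric] d e1 e2
    by (simp add: divide_simps) (simp add: algebra_simps power3_eq_cube power2_eq_square)
qed

lemma phi_deriv2_div_cube_antimono:
  assumes "lam \<le> -1/2" "0 < x" "x \<le> y" "y < 1"
  shows "y powr (lam - 1) / phi_deriv lam y ^ 3 \<le> x powr (lam - 1) / phi_deriv lam x ^ 3"
proof -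
  have mono: "x powr (-2 * lam - 1) / (1 - x powr (-lam)) ^ 3 \<le> y powr (-2 * lam - 1) / (1 - y powr (-lam)) ^ 3"
  proof (rule frac_le)
    show "x powr (-2 * lam - 1) \<le> y powr (-2 * lam - 1)" using assms by (intro powr_mono2) auto
    have "y powr (-lam) < 1" using powr_less_mono2[of "-lam" y 1] assms by simp
    moreover have "x powr (-lam) \<le> y powr (-lam)" using assms by (intro powr_mono2) auto
    ultimately show "0 < (1 - y powr (-lam)) ^ 3" "(1 - y powr (-lam)) ^ 3 \<le> (1 - x powr (-lam)) ^ 3"
      by (auto intro: power_mono)
  qed simp
  have "lam ^ 3 < 0" using assms by (simp add: power_less_zero_eq)
  then have le: "lam ^ 3 * (y powr (-2 * lam - 1) / (1 - y powr (-lam)) ^ 3)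
      \<le> lam ^ 3 * (x powr (-2 * lam - 1) / (1 - x powr (-lam)) ^ 3)"
    using mult_left_mono_neg[OF mono] by simp
  have "lam < 0" "0 < y" "x < 1" using assms by simp_all
  then show ?thesis using le assms
    unfolding phi_deriv2_div_cube_eq[OF \<open>lam < 0\<close> \<open>0 < x\<close> \<open>x < 1\<close>]
      phi_deriv2_div_cube_eq[OF \<open>lam < 0\<close> \<open>0 < y\<close> \<open>y < 1\<close>] by simp
qed

lemma neg_pinv_deriv_has_real_derivative:
  assumes "-1 < lam" "0 < t" "t < phi lam 0"
  shows "(neg_pinv_deriv lam has_real_derivative
      phi_pinv lam t powr (lam - 1) / phi_deriv lam (phi_pinv lam t) ^ 3) (at t)"
proof -
  let ?x = "phi_pinv lam t"
  let ?d = "phi_deriv lam ?x"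
  have x: "0 < ?x" "?x < 1" using phi_pinv_bounds[OF assms(1)] assms by auto
  then have "?d \<noteq> 0" using phi_deriv_neg by (metis less_irrefl)
  have "((\<lambda>s. phi_deriv lam (phi_pinv lam s)) has_real_derivative ?x powr (lam - 1) * inverse ?d) (at t)"
    by (rule DERIV_chain2[OF phi_deriv_has_real_derivative[OF x(1)]
          phi_pinv_has_real_derivative_below[OF assms]])
  then have D: "((\<lambda>s. - inverse (phi_deriv lam (phi_pinv lam s))) has_real_derivative
      - (- (?x powr (lam - 1) * inverse ?d * inverse (?d ^ Suc (Suc 0))))) (at t)"
    by (intro DERIV_minus DERIV_inverse_fun \<open>?d \<noteq> 0\<close>)
  have eq: "- (- (?x powr (lam - 1) * inverse ?d * inverse (?d ^ Suc (Suc 0)))) = ?x powr (lam - 1) / ?d ^ 3"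
    by (simp add: divide_inverse power3_eq_cube power2_eq_square mult.assoc)
  show ?thesis
    by (rule has_field_derivative_transform_within_open[OF D[unfolded eq], of "{..<phi lam 0}"])
       (use assms in \<open>auto simp: neg_pinv_deriv_def\<close>)
qed

lemma convex_on_neg_pinv_deriv_below:
  assumes "-1 < lam" "lam \<le> -1/2"
  shows "convex_on {0<..<phi lam 0} (neg_pinv_deriv lam)"
proof (rule convex_on_realI)
  show "(neg_pinv_deriv lam has_real_derivative
      phi_pinv lam t powr (lam - 1) / phi_deriv lam (phi_pinv lam t) ^ 3) (at t)"
    if "t \<in> {0<..<phi lam 0}" for t
    using neg_pinv_deriv_has_real_derivative[OF assms(1)] that by simp
  fix s t assume st: "s \<in> {0<..<phi lam 0}" "t \<in> {0<..<phi lam 0}" "s \<le> t"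
  have "0 < phi_pinv lam t" "phi_pinv lam s < 1" using phi_pinv_bounds[OF assms(1)] st by auto
  moreover have "phi_pinv lam t \<le> phi_pinv lam s" using phi_pinv_antimono[OF assms(1)] st by simp
  ultimately show "phi_pinv lam s powr (lam - 1) / phi_deriv lam (phi_pinv lam s) ^ 3
      \<le> phi_pinv lam t powr (lam - 1) / phi_deriv lam (phi_pinv lam t) ^ 3"
    using phi_deriv2_div_cube_antimono[OF assms(2)] by simp
qed simp

lemma tendsto_neg_inverse_phi_deriv:
  assumes "lam \<le> 0"
  shows "((\<lambda>x. - inverse (phi_deriv lam x)) \<longlongrightarrow> 0) (at_right 0)"
proof (cases "lam = 0")
  case True
  have "((\<lambda>x::real. - inverse (ln x)) \<longlongrightarrow> 0) (at_right 0)" by real_asymp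
  then show ?thesis by (simp add: True phi_deriv_eq_ln)
next
  case False
  then have "lam < 0" using assms by simp
  then have "((\<lambda>x::real. - inverse ((x powr lam - 1) / lam)) \<longlongrightarrow> 0) (at_right 0)" by real_asymp
  then show ?thesis by (simp add: phi_deriv_eq_powr[OF False])
qed

lemma neg_pinv_deriv_tendsto_at_left:
  assumes "-1 < lam" "lam \<le> 0"
  shows "(neg_pinv_deriv lam \<longlongrightarrow> 0) (at_left (phi lam 0))"
proof -
  have "((\<lambda>t. - inverse (phi_deriv lam (phi_pinv lam t))) \<longlongrightarrow> 0) (at_left (phi lam 0))"
    by (rule filterlim_compose[OF tendsto_neg_inverse_phi_deriv[OF assms(2)]
          phi_pinv_tendsto_at_left[OF assms(1)]])
  moreover have "\<forall>\<^sub>F t in at_left (phi lam 0). - inverse (phi_deriv lam (phi_pinv lam t)) = neg_pinv_deriv lam t"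
    by (rule eventually_mono[OF eventually_at_left_real[OF phi_at_0_pos[OF assms(1)]]])
       (simp add: neg_pinv_deriv_def)
  ultimately show ?thesis by (rule Lim_transform_eventually)
qed

lemma convex_on_neg_pinv_deriv:
  assumes "-1 < lam" "lam \<le> -1/2"
  shows "convex_on {0<..} (neg_pinv_deriv lam)"
proof (rule convex_on_extend_by_zero)
  have "(neg_pinv_deriv lam \<longlongrightarrow> neg_pinv_deriv lam (phi lam 0)) (at_left (phi lam 0))"
    using neg_pinv_deriv_tendsto_at_left[OF assms(1)] assms(2) by (simp add: neg_pinv_deriv_def)
  then show "convex_on {0<..phi lam 0} (neg_pinv_deriv lam)"
    by (rule convex_on_extend_right[OF convex_on_neg_pinv_deriv_below[OF assms]])
  show "\<And>t. 0 < t \<Longrightarrow> t \<le> phi lam 0 \<Longrightarrow> 0 \<le> neg_pinv_deriv lam t"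
    by (rule neg_pinv_deriv_nonneg[OF assms(1)])
  show "\<And>t. phi lam 0 \<le> t \<Longrightarrow> neg_pinv_deriv lam t = 0" by (simp add: neg_pinv_deriv_def)
qed

lemma filterlim_phi_deriv_ratio_at_top:
  assumes "-1/2 < lam" "lam \<le> 0"
  shows "filterlim (\<lambda>x. - inverse (phi_deriv lam x) / (phi lam 0 - phi lam x)) at_top (at_right 0)"
proof (cases "lam = 0")
  case True
  have "filterlim (\<lambda>x::real. - inverse (ln x) / (1 - (1 - x + x * ln x))) at_top (at_right 0)"
    by real_asymp
  then show ?thesis by (simp add: True phi_eq_ln phi_deriv_eq_ln)
next
  case False
  then have "lam < 0" using assms by simp
  then have lim: "filterlim (\<lambda>x::real. lam ^ 2 * (lam + 1) / (x * (x powr lam - 1) * (x powr lam - (1 + lam))))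
      at_top (at_right 0)"
    using assms by real_asymp
  have ev: "\<forall>\<^sub>F x in at_right 0.
      lam ^ 2 * (lam + 1) / (x * (x powr lam - 1) * (x powr lam - (1 + lam)))
      = - inverse (phi_deriv lam x) / (phi lam 0 - phi lam x)"
  proof (rule eventually_mono[OF eventually_at_right_real[of 0 1]])
    fix x :: real assume x: "x \<in> {0<..<1}"
    then have "1 < x powr lam" using powr_less_mono2_neg[OF \<open>lam < 0\<close>, of x 1] by simp
    then have "x powr lam - 1 \<noteq> 0" "x powr lam - (1 + lam) \<noteq> 0" "(1 + lam) - x powr lam \<noteq> 0"
      using \<open>lam < 0\<close> by auto
    moreover have "lam + 1 \<noteq> 0" using assms by simp
    moreover have gap: "phi lam 0 - phi lam x = x * ((1 + lam) - x powr lam) / (lam * (lam + 1))"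
      using phi_0_minus_phi[of lam x] assms False x by simp
    ultimately show "lam ^ 2 * (lam + 1) / (x * (x powr lam - 1) * (x powr lam - (1 + lam)))
      = - inverse (phi_deriv lam x) / (phi lam 0 - phi lam x)"
      using x False unfolding gap phi_deriv_eq_powr[OF False]
      by (simp add: divide_simps) (simp add: algebra_simps power2_eq_square)
  qed simp
  show ?thesis using filterlim_cong[OF refl refl ev] lim by simp
qed

lemma not_convex_on_neg_pinv_deriv:
  assumes "-1/2 < lam" "lam \<le> 0"
  shows "\<not> convex_on {0<..} (neg_pinv_deriv lam)"
proof
  assume cv: "convex_on {0<..} (neg_pinv_deriv lam)"
  have lam: "-1 < lam" using assms by simp
  define c where "c = phi lam 0"
  define t0 where "t0 = phi lam (1/2)"
  have t0: "0 < t0" "t0 < c"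
    using phi_strict_decreasing[OF lam, of "1/2" 1] phi_strict_decreasing[OF lam, of 0 "1/2"]
    by (simp_all add: t0_def c_def phi_at_1)
  define K where "K = neg_pinv_deriv lam t0 / (c - t0)"
  have bound: "- inverse (phi_deriv lam x) / (c - phi lam x) \<le> K" if "0 < x" "x < 1/2" for x
  proof -
    define s where "s = phi lam x"
    have s: "t0 < s" "s < c"
      using phi_strict_decreasing[OF lam, of x "1/2"] phi_strict_decreasing[OF lam, of 0 x] that
      by (simp_all add: s_def t0_def c_def)
    have "(neg_pinv_deriv lam t0 - neg_pinv_deriv lam c) / (t0 - c)
        \<le> (neg_pinv_deriv lam s - neg_pinv_deriv lam c) / (s - c)"
      by (rule convex_on_slope_le(2)[OF cv]) (use t0 s in auto)
    moreover have "neg_pinv_deriv lam c = 0" by (simp add: neg_pinv_deriv_def c_def)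
    moreover have "neg_pinv_deriv lam s = - inverse (phi_deriv lam x)"
      using s phi_pinv_phi[OF lam, of x] that by (simp add: neg_pinv_deriv_def s_def c_def)
    moreover have "u / (v - c) = - (u / (c - v))" for u v by (simp add: minus_divide_right)
    ultimately show ?thesis by (simp add: K_def s_def)
  qed
  have "\<forall>\<^sub>F x in at_right 0. K < - inverse (phi_deriv lam x) / (c - phi lam x)"
    using filterlim_phi_deriv_ratio_at_top[OF assms] by (simp add: filterlim_at_top_dense c_def)
  moreover have "\<forall>\<^sub>F x in at_right (0::real). x \<in> {0<..<1/2}" by (rule eventually_at_right_real) simp
  ultimately have "\<forall>\<^sub>F x in at_right (0::real). False"
    by eventually_elim (use bound in fastforce)
  then show False by simp
qed

lemma convex_on_cong:
  assumes "\<And>x. x \<in> A \<Longrightarrow> f x = g x"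
  shows "convex_on A f \<longleftrightarrow> convex_on A g"
  using assms unfolding convex_on_def convex_def by auto

theorem lemma3:
  fixes lam :: real
  assumes "-1 < lam" and "lam \<le> 0"
  shows "antimono_on {0<..} (\<lambda>t. - deriv (phi_pinv lam) t)
       \<and> (lam \<le> -1/2 \<longrightarrow> convex_on {0<..} (\<lambda>t. - deriv (phi_pinv lam) t))
       \<and> (-1/2 < lam \<longrightarrow> \<not> convex_on {0<..} (\<lambda>t. - deriv (phi_pinv lam) t))"
proof -
  have eq: "- deriv (phi_pinv lam) t = neg_pinv_deriv lam t" if "t \<in> {0<..}" for t
    using neg_deriv_phi_pinv[OF assms] that by simp
  have "antimono_on {0<..} (\<lambda>t. - deriv (phi_pinv lam) t)"
    using neg_pinv_deriv_antimono[OF assms(1)] by (auto simp: monotone_on_def eq)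
  moreover have "convex_on {0<..} (\<lambda>t. - deriv (phi_pinv lam) t) \<longleftrightarrow> convex_on {0<..} (neg_pinv_deriv lam)"
    by (rule convex_on_cong) (rule eq)
  ultimately show ?thesis
    using convex_on_neg_pinv_deriv[OF assms(1)] not_convex_on_neg_pinv_deriv[OF _ assms(2)] by simp
qed

end
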